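(* Let $\mathcal{F}$ be a finite forest and let $\vec\lambda:V(\mathcal{F})\to\mathbb{Z}_{\ge 0}$ be any labelling of its vertices. Then the bounded degree complex $\mathrm{BD}^{\vec\lambda}(\mathcal{F})$ is vertex decomposable.
   Context: For a finite simple graph $G$ and $\vec\lambda:V(G)\to\mathbb{Z}_{\ge0}$, the bounded degree complex $\mathrm{BD}^{\vec\lambda}(G)$ is the simplicial complex whose simplices are the subsets $\sigma\subseteq E(G)$ such that for every vertex $v\in V(G)$ the number of edges of $\sigma$ incident to $v$ is at most $\vec\lambda(v)$. For a simplicial complex $K$ and a vertex $v$, $\mathrm{lk}(v,K)=\{\tau\in K: v\notin\tau,\ \tau\cup\{v\}\in K\}$ and $\mathrm{del}(v,K)=\{\tau\in K: v\notin\tau\}$. A simplicial complex $K$ is vertex decomposable if $K$ is a simplex (the set of all subsets of a finite set, including $\{\emptyset\}$), or $K$ contains a vertex $v$ such that (i) both $\mathrm{lk}(v,K)$ and $\mathrm{del}(v,K)$ are vertex decomposable, and (ii) every facet (maximal simplex) of $\mathrm{del}(v,K)$ is a facet of $K$. *)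

theory Defs
  imports Main
begin

definition simple_graph :: "'a set \<Rightarrow> 'a set set \<Rightarrow> bool" where
  "simple_graph V E \<longleftrightarrow> finite V \<and> (\<forall>e\<in>E. e \<subseteq> V \<and> card e = 2)"

definition is_cycle :: "'a set set \<Rightarrow> 'a list \<Rightarrow> bool" where
  "is_cycle E cs \<longleftrightarrow> length cs \<ge> 3 \<and> distinct cs \<and>
     (\<forall>i < length cs. {cs ! i, cs ! ((i + 1) mod length cs)} \<in> E)"

definition forest :: "'a set \<Rightarrow> 'a set set \<Rightarrow> bool" where
  "forest V E \<longleftrightarrow> simple_graph V E \<and> (\<nexists>cs. is_cycle E cs)"

definition BD :: "'a set \<Rightarrow> 'a set set \<Rightarrow> ('a \<Rightarrow> nat) \<Rightarrow> 'a set set set" where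
  "BD V E lam = {\<sigma>. \<sigma> \<subseteq> E \<and> (\<forall>v\<in>V. card {e\<in>\<sigma>. v \<in> e} \<le> lam v)}"

definition lk :: "'b \<Rightarrow> 'b set set \<Rightarrow> 'b set set" where
  "lk v K = {\<tau>\<in>K. v \<notin> \<tau> \<and> insert v \<tau> \<in> K}"

definition del :: "'b \<Rightarrow> 'b set set \<Rightarrow> 'b set set" where
  "del v K = {\<tau>\<in>K. v \<notin> \<tau>}"

definition facet :: "'b set \<Rightarrow> 'b set set \<Rightarrow> bool" where
  "facet \<sigma> K \<longleftrightarrow> \<sigma> \<in> K \<and> (\<forall>\<tau>\<in>K. \<sigma> \<subseteq> \<tau> \<longrightarrow> \<tau> = \<sigma>)"

definition is_simplex :: "'b set set \<Rightarrow> bool" where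
  "is_simplex K \<longleftrightarrow> (\<exists>S. finite S \<and> K = Pow S)"

inductive vertex_decomposable :: "'b set set \<Rightarrow> bool" where
  simplex: "is_simplex K \<Longrightarrow> vertex_decomposable K"
| decomp: "\<lbrakk> {v} \<in> K; vertex_decomposable (lk v K); vertex_decomposable (del v K);
             \<forall>\<sigma>. facet \<sigma> (del v K) \<longrightarrow> facet \<sigma> K \<rbrakk> \<Longrightarrow> vertex_decomposable K"

end

theory Submission
  imports Defs
begin

text \<open>Induction on the number of edges. An edge at a vertex of capacity 0 lies in no face and
  can be deleted. Otherwise take a longest path \<open>u w x \<dots>\<close>: then \<open>u\<close> is a leaf and every
  neighbour of \<open>w\<close> other than \<open>x\<close> is a leaf. If \<open>w\<close> can carry all its edges, the leaf edge
  \<open>uw\<close> can be added to every face, so the complex is a cone over a smaller one. Otherwise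
  \<open>wx\<close> (or \<open>uw\<close> if \<open>wx\<close> is no edge) is a shedding edge: a facet avoiding it but leaving \<open>w\<close>
  unsaturated would miss a leaf edge at \<open>w\<close>, which could be added. Its deletion and its link
  are again bounded degree complexes of the smaller forest, the link with the capacities at
  the two ends lowered by one.\<close>

section \<open>Cones\<close>

lemma facet_mem: "facet \<sigma> K \<Longrightarrow> \<sigma> \<in> K"
  by (simp add: facet_def)

lemma facet_maximal: "facet \<sigma> K \<Longrightarrow> \<tau> \<in> K \<Longrightarrow> \<sigma> \<subseteq> \<tau> \<Longrightarrow> \<tau> = \<sigma>"
  unfolding facet_def by blast

lemma facetI: "\<sigma> \<in> K \<Longrightarrow> (\<And>\<tau>. \<tau> \<in> K \<Longrightarrow> \<sigma> \<subseteq> \<tau> \<Longrightarrow> \<tau> = \<sigma>) \<Longrightarrow> facet \<sigma> K"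
  unfolding facet_def by blast

definition cone :: "'b set set \<Rightarrow> 'b \<Rightarrow> 'b set set" where
  "cone K e = {\<tau>. \<tau> - {e} \<in> K}"

lemma lk_cone: "v \<noteq> e \<Longrightarrow> lk v (cone K e) = cone (lk v K) e"
  unfolding lk_def cone_def by (auto simp: insert_Diff_if)

lemma del_cone: "v \<noteq> e \<Longrightarrow> del v (cone K e) = cone (del v K) e"
  unfolding del_def cone_def by auto

lemma facet_cone_iff:
  assumes "\<forall>\<tau>\<in>K. e \<notin> \<tau>"
  shows "facet \<sigma> (cone K e) \<longleftrightarrow> e \<in> \<sigma> \<and> facet (\<sigma> - {e}) K"
proof
  assume f: "facet \<sigma> (cone K e)"
  have \<sigma>: "\<sigma> - {e} \<in> K"
    using facet_mem[OF f] by (simp add: cone_def)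
  have max: "\<tau> = \<sigma>" if "\<tau> - {e} \<in> K" "\<sigma> \<subseteq> \<tau>" for \<tau>
    using facet_maximal[OF f] that by (simp add: cone_def)
  have "e \<in> \<sigma>"
    using max[of "insert e \<sigma>"] \<sigma> by auto
  moreover have "facet (\<sigma> - {e}) K"
  proof (rule facetI)
    fix \<tau> assume "\<tau> \<in> K" "\<sigma> - {e} \<subseteq> \<tau>"
    then have "insert e \<tau> = \<sigma>" and "e \<notin> \<tau>"
      using max[of "insert e \<tau>"] assms by auto
    then show "\<tau> = \<sigma> - {e}" by blast
  qed (fact \<sigma>)
  ultimately show "e \<in> \<sigma> \<and> facet (\<sigma> - {e}) K" ..
next
  assume "e \<in> \<sigma> \<and> facet (\<sigma> - {e}) K"
  then have "e \<in> \<sigma>" and f: "facet (\<sigma> - {e}) K"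
    by blast+
  show "facet \<sigma> (cone K e)"
  proof (rule facetI)
    show "\<sigma> \<in> cone K e"
      using facet_mem[OF f] by (simp add: cone_def)
    fix \<tau> assume "\<tau> \<in> cone K e" "\<sigma> \<subseteq> \<tau>"
    then have "\<tau> - {e} = \<sigma> - {e}"
      using facet_maximal[OF f] by (auto simp: cone_def)
    then show "\<tau> = \<sigma>"
      using \<open>e \<in> \<sigma>\<close> \<open>\<sigma> \<subseteq> \<tau>\<close> by blast
  qed
qed

lemma vertex_decomposable_cone:
  "vertex_decomposable K \<Longrightarrow> \<forall>\<tau>\<in>K. e \<notin> \<tau> \<Longrightarrow> vertex_decomposable (cone K e)"
proof (induction rule: vertex_decomposable.induct)
  case (simplex K)
  then obtain S where "finite S" "K = Pow S"
    by (auto simp: is_simplex_def)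
  then have "is_simplex (cone K e)"
    unfolding is_simplex_def cone_def by (intro exI[of _ "insert e S"]) auto
  then show ?case
    by (rule vertex_decomposable.simplex)
next
  case (decomp v K)
  have "v \<noteq> e"
    using decomp.prems decomp.hyps(1) by auto
  have lk: "\<forall>\<tau>\<in>lk v K. e \<notin> \<tau>" and del: "\<forall>\<tau>\<in>del v K. e \<notin> \<tau>"
    using decomp.prems by (auto simp: lk_def del_def)
  show ?case
  proof (rule vertex_decomposable.decomp)
    show "{v} \<in> cone K e"
      using decomp.hyps(1) \<open>v \<noteq> e\<close> by (simp add: cone_def)
    show "vertex_decomposable (lk v (cone K e))"
      using decomp.IH(1) lk lk_cone[OF \<open>v \<noteq> e\<close>] by simp
    show "vertex_decomposable (del v (cone K e))"
      using decomp.IH(2) del del_cone[OF \<open>v \<noteq> e\<close>] by simp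
    show "\<forall>\<sigma>. facet \<sigma> (del v (cone K e)) \<longrightarrow> facet \<sigma> (cone K e)"
      using decomp.hyps(4) decomp.prems del
      by (simp add: del_cone[OF \<open>v \<noteq> e\<close>] facet_cone_iff)
  qed
qed

section \<open>Longest paths in forests\<close>

lemma card_2_other_elem:
  assumes "card e = 2" "v \<in> e"
  obtains y where "e = {v, y}" "y \<noteq> v"
proof -
  have "\<exists>y. e = {v, y} \<and> y \<noteq> v"
    using assms by (auto simp: card_2_iff)
  then show ?thesis
    using that by blast
qed

lemma forest_subset: "forest V E \<Longrightarrow> E' \<subseteq> E \<Longrightarrow> forest V E'"
  unfolding forest_def simple_graph_def is_cycle_def by blast

definition is_path :: "'a set set \<Rightarrow> 'a list \<Rightarrow> bool" where
  "is_path E ps \<longleftrightarrow> distinct ps \<and> (\<forall>i. Suc i < length ps \<longrightarrow> {ps ! i, ps ! Suc i} \<in> E)"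

lemma is_path_edge: "is_path E ps \<Longrightarrow> Suc i < length ps \<Longrightarrow> {ps ! i, ps ! Suc i} \<in> E"
  by (simp add: is_path_def)

lemma is_path_take: "is_path E ps \<Longrightarrow> is_path E (take k ps)"
  by (auto simp: is_path_def)

lemma is_path_drop: "is_path E ps \<Longrightarrow> is_path E (drop k ps)"
  by (auto simp: is_path_def add.commute)

lemma is_path_Cons:
  assumes "is_path E ps" "ps \<noteq> []" "y \<notin> set ps" "{y, hd ps} \<in> E"
  shows "is_path E (y # ps)"
  unfolding is_path_def
proof (intro conjI allI impI)
  fix i assume "Suc i < length (y # ps)"
  then show "{(y # ps) ! i, (y # ps) ! Suc i} \<in> E"
    using assms by (cases i) (auto simp: is_path_def hd_conv_nth)
qed (use assms in \<open>auto simp: is_path_def\<close>)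

lemma is_cycle_if_closed_path:
  assumes "is_path E ps" "3 \<le> length ps" "{last ps, hd ps} \<in> E"
  shows "is_cycle E ps"
  unfolding is_cycle_def
proof (intro conjI allI impI)
  fix i assume i: "i < length ps"
  show "{ps ! i, ps ! ((i + 1) mod length ps)} \<in> E"
  proof (cases "Suc i < length ps")
    case True
    then show ?thesis using assms(1) by (simp add: is_path_def)
  next
    case False
    then have "Suc i = length ps"
      using i by simp
    then have "i = length ps - 1" "(i + 1) mod length ps = 0"
      by simp_all
    moreover have "ps \<noteq> []"
      using i by auto
    ultimately show ?thesis
      using assms(3) by (simp add: last_conv_nth hd_conv_nth)
  qed
qed (use assms in \<open>auto simp: is_path_def\<close>)

lemma is_cycle_if_chord:
  assumes "is_path E ps" "i + 2 \<le> j" "j < length ps" "{ps ! i, ps ! j} \<in> E"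
  shows "is_cycle E (drop i (take (Suc j) ps))"
proof (rule is_cycle_if_closed_path)
  let ?cs = "drop i (take (Suc j) ps)"
  show "is_path E ?cs"
    using assms(1) by (intro is_path_drop is_path_take)
  have "length ?cs = Suc j - i"
    using assms(3) by simp
  then have "last ?cs = ps ! j" "hd ?cs = ps ! i" "3 \<le> length ?cs"
    using assms(2,3) by (simp_all add: last_conv_nth hd_conv_nth)
  then show "3 \<le> length ?cs" "{last ?cs, hd ?cs} \<in> E"
    using assms(4) by (simp_all add: insert_commute)
qed

definition longest_path :: "'a set \<Rightarrow> 'a set set \<Rightarrow> 'a list \<Rightarrow> bool" where
  "longest_path V E ps \<longleftrightarrow> is_path E ps \<and> set ps \<subseteq> V \<and>
     (\<forall>qs. is_path E qs \<longrightarrow> set qs \<subseteq> V \<longrightarrow> length qs \<le> length ps)"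

lemma ex_longest_path:
  assumes sg: "simple_graph V E" and "e \<in> E"
  obtains ps where "longest_path V E ps" "2 \<le> length ps"
proof -
  obtain a b where ab: "e = {a, b}" "a \<noteq> b"
    using assms by (auto simp: simple_graph_def card_2_iff)
  define P where "P ps \<longleftrightarrow> is_path E ps \<and> set ps \<subseteq> V" for ps
  have ab_path: "P [a, b]"
    using assms ab by (auto simp: P_def is_path_def simple_graph_def less_Suc_eq)
  have bounded: "length ps \<le> card V" if "P ps" for ps
  proof -
    have "length ps = card (set ps)"
      using that by (simp add: P_def is_path_def distinct_card)
    also have "\<dots> \<le> card V"
      using that sg by (intro card_mono) (auto simp: P_def simple_graph_def)
    finally show ?thesis .
  qed
  have "\<exists>ps. P ps \<and> length ps = 2"
    using ab_path by (intro exI[of _ "[a, b]"]) simp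
  moreover have "\<forall>m. (\<exists>ps. P ps \<and> length ps = m) \<longrightarrow> m \<le> card V"
    using bounded by blast
  ultimately have "\<exists>n. (\<exists>ps. P ps \<and> length ps = n) \<and> (\<forall>m. (\<exists>ps. P ps \<and> length ps = m) \<longrightarrow> m \<le> n)"
    by (rule Nat.ex_has_greatest_nat)
  then obtain ps where "P ps" "\<And>qs. P qs \<Longrightarrow> length qs \<le> length ps"
    by blast
  moreover from this have "2 \<le> length ps"
    using ab_path by fastforce
  ultimately show ?thesis
    using that unfolding longest_path_def P_def by blast
qed

definition pendant :: "'a set set \<Rightarrow> 'a \<Rightarrow> 'a \<Rightarrow> bool" where
  "pendant E w y \<longleftrightarrow> {w, y} \<in> E \<and> w \<noteq> y \<and> (\<forall>g\<in>E. y \<in> g \<longrightarrow> g = {w, y})"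

lemma pendant_Diff: "pendant E w y \<Longrightarrow> {w, y} \<noteq> e \<Longrightarrow> pendant (E - {e}) w y"
  by (auto simp: pendant_def)

text \<open>An edge at the start of a longest path that does not lead back into the path could
  extend it, and one that does closes a cycle.\<close>

lemma pendant_longest_path_start:
  assumes F: "forest V E" and ps: "longest_path V E ps" "2 \<le> length ps"
  shows "pendant E (ps ! 1) (ps ! 0)"
proof -
  have sg: "\<forall>e\<in>E. e \<subseteq> V \<and> card e = 2" and nocyc: "\<And>cs. \<not> is_cycle E cs"
    using F by (auto simp: forest_def simple_graph_def)
  have path: "is_path E ps" "distinct ps" "set ps \<subseteq> V"
    using ps(1) unfolding longest_path_def is_path_def by blast+
  have "1 < length ps" "0 < length ps"
    using ps(2) by auto
  then have "ps ! 1 \<noteq> ps ! 0"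
    using nth_eq_iff_index_eq[OF path(2)] by simp
  moreover have "{ps ! 0, ps ! 1} \<in> E"
    using is_path_edge[OF path(1), of 0] \<open>1 < length ps\<close> by simp
  moreover have "g = {ps ! 0, ps ! 1}" if g: "g \<in> E" "ps ! 0 \<in> g" for g
  proof -
    have "card g = 2"
      using sg g(1) by blast
    then obtain y where y: "g = {ps ! 0, y}" "y \<noteq> ps ! 0"
      using g(2) by (rule card_2_other_elem)
    show ?thesis
    proof (cases "y \<in> set ps")
      case False
      have "ps \<noteq> []"
        using ps(2) by auto
      then have "hd ps = ps ! 0"
        by (rule hd_conv_nth)
      then have "is_path E (y # ps)"
        using ps(2) g y False by (intro is_path_Cons[OF path(1)]) (auto simp: insert_commute[of y])
      moreover have "set (y # ps) \<subseteq> V"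
        using path(3) sg g y by auto
      ultimately have "length (y # ps) \<le> length ps"
        using ps(1) unfolding longest_path_def by blast
      then show ?thesis by simp
    next
      case True
      then obtain j where j: "j < length ps" "ps ! j = y"
        by (auto simp: in_set_conv_nth)
      have "j \<noteq> 0" using j y by (cases j) auto
      show ?thesis
      proof (rule ccontr)
        assume "g \<noteq> {ps ! 0, ps ! 1}"
        then have "j \<ge> 2" using j y \<open>j \<noteq> 0\<close> by (cases "j = 1") auto
        then have "is_cycle E (drop 0 (take (Suc j) ps))"
          using j y g by (intro is_cycle_if_chord[OF path(1)]) auto
        then show False using nocyc by blast
      qed
    qed
  qed
  ultimately show ?thesis
    unfolding pendant_def insert_commute[of "ps ! 1" "ps ! 0"] by blast
qed

text \<open>For a longest path \<open>u w x \<dots>\<close>, a neighbour \<open>y \<noteq> x\<close> of \<open>w\<close> is either \<open>u\<close> or lies off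
  the path (else a cycle closes), and then \<open>y w x \<dots>\<close> is another longest path.\<close>

lemma forest_pendant_star:
  assumes F: "forest V E" and "E \<noteq> {}"
  obtains w u x where "pendant E w u" "\<And>y. {w, y} \<in> E \<Longrightarrow> y \<noteq> x \<Longrightarrow> pendant E w y"
proof -
  have sg: "\<forall>e\<in>E. e \<subseteq> V \<and> card e = 2" and nocyc: "\<And>cs. \<not> is_cycle E cs"
    using F by (auto simp: forest_def simple_graph_def)
  obtain e where "e \<in> E"
    using assms(2) by blast
  moreover have "simple_graph V E"
    using F by (simp add: forest_def)
  ultimately obtain ps where ps: "longest_path V E ps" "2 \<le> length ps"
    using ex_longest_path by blast
  have path: "is_path E ps" "distinct ps" "set ps \<subseteq> V"
    using ps(1) unfolding longest_path_def is_path_def by blast+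
  define w u x where "w = ps ! 1" and "u = ps ! 0" and "x = ps ! 2"
  have "pendant E w y" if y: "{w, y} \<in> E" "y \<noteq> x" for y
  proof (cases "y \<in> set ps")
    case True
    then obtain j where j: "j < length ps" "ps ! j = y"
      by (auto simp: in_set_conv_nth)
    have "card {w, y} = 2"
      using sg y by blast
    then have "y \<noteq> w"
      by (cases "y = w") simp_all
    then have "j \<noteq> 1" "j \<noteq> 2"
      using j y unfolding w_def x_def by auto
    show ?thesis
    proof (cases "j = 0")
      case True
      then show ?thesis
        using pendant_longest_path_start[OF F ps] j unfolding w_def u_def by simp
    next
      case False
      with \<open>j \<noteq> 1\<close> \<open>j \<noteq> 2\<close> have "j \<ge> 3" by linarith
      then have "is_cycle E (drop 1 (take (Suc j) ps))"
        using j y by (intro is_cycle_if_chord[OF path(1)]) (auto simp: w_def)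
      then show ?thesis using nocyc by blast
    qed
  next
    case False
    obtain a rest where ps_eq: "ps = a # rest" and "rest \<noteq> []"
      using ps(2) by (cases ps) (auto simp flip: length_greater_0_conv)
    then have "hd rest = w"
      by (simp add: w_def hd_conv_nth)
    have "is_path E (y # rest)"
    proof (rule is_path_Cons)
      show "is_path E rest"
        using is_path_drop[OF path(1), of 1] ps_eq by simp
      show "{y, hd rest} \<in> E"
        using y(1) \<open>hd rest = w\<close> by (metis insert_commute)
    qed (use False ps_eq \<open>rest \<noteq> []\<close> in auto)
    moreover have "set (y # rest) \<subseteq> V"
      using path(3) ps_eq sg y(1) by auto
    ultimately have "longest_path V E (y # rest)"
      using ps(1) ps_eq by (simp add: longest_path_def)
    moreover have "2 \<le> length (y # rest)"
      using \<open>rest \<noteq> []\<close> by (cases rest) auto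
    ultimately have "pendant E ((y # rest) ! 1) ((y # rest) ! 0)"
      by (rule pendant_longest_path_start[OF F])
    then show ?thesis
      using \<open>hd rest = w\<close> \<open>rest \<noteq> []\<close> by (simp add: hd_conv_nth)
  qed
  moreover have "pendant E w u"
    using pendant_longest_path_start[OF F ps] unfolding w_def u_def .
  ultimately show ?thesis using that by blast
qed

section \<open>Bounded degree complexes\<close>

abbreviation deg :: "'a set set \<Rightarrow> 'a \<Rightarrow> nat" where
  "deg F v \<equiv> card {f\<in>F. v \<in> f}"

lemma deg_mono: "finite \<tau> \<Longrightarrow> \<sigma> \<subseteq> \<tau> \<Longrightarrow> deg \<sigma> v \<le> deg \<tau> v"
  by (rule card_mono) auto

lemma deg_insert:
  assumes "finite \<sigma>" "e \<notin> \<sigma>"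
  shows "deg (insert e \<sigma>) v = (if v \<in> e then Suc (deg \<sigma> v) else deg \<sigma> v)"
proof -
  have "{f\<in>insert e \<sigma>. v \<in> f} = (if v \<in> e then insert e {f\<in>\<sigma>. v \<in> f} else {f\<in>\<sigma>. v \<in> f})"
    by auto
  then show ?thesis
    using assms by simp
qed

lemma deg_pendant:
  assumes "pendant E w y"
  shows "deg E y = 1"
proof -
  have "{f\<in>E. y \<in> f} = {{w, y}}"
    using assms by (auto simp: pendant_def)
  then show ?thesis by simp
qed

lemma finite_edges: "simple_graph V E \<Longrightarrow> finite E"
  unfolding simple_graph_def by (meson Pow_iff finite_Pow_iff finite_subset subsetI)

lemma finite_BD_face: "finite E \<Longrightarrow> \<sigma> \<in> BD V E lam \<Longrightarrow> finite \<sigma>"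
  by (auto simp: BD_def intro: finite_subset)

lemma is_simplex_BD_no_edges: "is_simplex (BD V {} lam)"
  unfolding is_simplex_def BD_def by (intro exI[of _ "{}"]) auto

lemma BD_Diff_edge_at_zero:
  assumes "finite E" "v \<in> e" "v \<in> V" "lam v = 0"
  shows "BD V E lam = BD V (E - {e}) lam"
proof (intro equalityI subsetI)
  fix \<sigma> assume \<sigma>: "\<sigma> \<in> BD V E lam"
  then have "deg \<sigma> v \<le> lam v"
    using assms(3) by (simp add: BD_def)
  then have "deg \<sigma> v = 0"
    using assms(4) by simp
  then have "e \<notin> \<sigma>"
    using finite_BD_face[OF assms(1) \<sigma>] assms(2) by auto
  then show "\<sigma> \<in> BD V (E - {e}) lam"
    using \<sigma> by (auto simp: BD_def)
qed (auto simp: BD_def)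

lemma del_BD: "del e (BD V E lam) = BD V (E - {e}) lam"
  unfolding del_def BD_def by auto

lemma lk_BD:
  assumes "finite E" "e \<in> E" "\<forall>v\<in>e. 1 \<le> lam v"
  shows "lk e (BD V E lam) = BD V (E - {e}) (\<lambda>v. if v \<in> e then lam v - 1 else lam v)"
proof (intro equalityI subsetI)
  fix \<tau> assume "\<tau> \<in> lk e (BD V E lam)"
  then have \<tau>: "insert e \<tau> \<in> BD V E lam" "e \<notin> \<tau>"
    by (auto simp: lk_def)
  then have "finite \<tau>"
    using finite_BD_face[OF assms(1) \<tau>(1)] by simp
  have "deg \<tau> v \<le> (if v \<in> e then lam v - 1 else lam v)" if "v \<in> V" for v
  proof -
    have "deg (insert e \<tau>) v \<le> lam v"
      using \<tau>(1) that by (simp add: BD_def)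
    then show ?thesis
      using deg_insert[OF \<open>finite \<tau>\<close> \<tau>(2), of v] by (auto split: if_splits)
  qed
  moreover have "\<tau> \<subseteq> E - {e}"
    using \<tau> by (auto simp: BD_def)
  ultimately show "\<tau> \<in> BD V (E - {e}) (\<lambda>v. if v \<in> e then lam v - 1 else lam v)"
    unfolding BD_def by blast
next
  fix \<tau> assume \<tau>: "\<tau> \<in> BD V (E - {e}) (\<lambda>v. if v \<in> e then lam v - 1 else lam v)"
  then have "\<tau> \<subseteq> E - {e}"
    by (simp add: BD_def)
  then have "e \<notin> \<tau>" "finite \<tau>"
    using assms(1) finite_subset by auto
  have "deg (insert e \<tau>) v \<le> lam v" if "v \<in> V" for v
  proof -
    have "deg \<tau> v \<le> (if v \<in> e then lam v - 1 else lam v)"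
      using \<tau> that by (simp add: BD_def)
    then show ?thesis
      using assms(3) deg_insert[OF \<open>finite \<tau>\<close> \<open>e \<notin> \<tau>\<close>, of v] by (auto split: if_splits)
  qed
  moreover have "insert e \<tau> \<subseteq> E"
    using \<open>\<tau> \<subseteq> E - {e}\<close> assms(2) by blast
  ultimately have ins: "insert e \<tau> \<in> BD V E lam"
    unfolding BD_def by blast
  have "deg \<tau> v \<le> lam v" if "v \<in> V" for v
    using deg_mono[of "insert e \<tau>" \<tau> v] \<open>finite \<tau>\<close> ins that by (force simp: BD_def)
  then have "\<tau> \<in> BD V E lam"
    using \<open>insert e \<tau> \<subseteq> E\<close> unfolding BD_def by blast
  then show "\<tau> \<in> lk e (BD V E lam)"
    using ins \<open>e \<notin> \<tau>\<close> by (simp add: lk_def)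
qed

lemma facet_BD_edge_saturated:
  assumes "facet \<sigma> (BD V E lam)" "finite E" "f \<in> E" "f \<notin> \<sigma>"
  shows "\<exists>v\<in>f \<inter> V. lam v \<le> deg \<sigma> v"
proof (rule ccontr)
  assume unsaturated: "\<not> (\<exists>v\<in>f \<inter> V. lam v \<le> deg \<sigma> v)"
  have \<sigma>: "\<sigma> \<in> BD V E lam"
    using assms(1) by (rule facet_mem)
  then have "finite \<sigma>"
    by (rule finite_BD_face[OF assms(2)])
  have "deg (insert f \<sigma>) v \<le> lam v" if "v \<in> V" for v
  proof (cases "v \<in> f")
    case True
    then have "deg \<sigma> v < lam v"
      using unsaturated that by (meson IntI not_le)
    then show ?thesis
      using True deg_insert[OF \<open>finite \<sigma>\<close> assms(4), of v] by simp
  next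
    case False
    then show ?thesis
      using \<sigma> that deg_insert[OF \<open>finite \<sigma>\<close> assms(4), of v] by (simp add: BD_def)
  qed
  then have "insert f \<sigma> \<in> BD V E lam"
    using \<sigma> assms(3) by (auto simp: BD_def)
  then have "insert f \<sigma> = \<sigma>"
    using facet_maximal[OF assms(1)] by blast
  then show False
    using assms(4) by blast
qed

lemma facet_BD_if_facet_Diff:
  assumes "facet \<sigma> (BD V (E - {e}) lam)" "finite E" "v \<in> e" "v \<in> V" "lam v \<le> deg \<sigma> v"
  shows "facet \<sigma> (BD V E lam)"
proof (rule facetI)
  have \<sigma>: "\<sigma> \<in> BD V (E - {e}) lam"
    using assms(1) by (rule facet_mem)
  then show "\<sigma> \<in> BD V E lam"
    by (auto simp: BD_def)
  fix \<tau> assume \<tau>: "\<tau> \<in> BD V E lam" "\<sigma> \<subseteq> \<tau>"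
  have "e \<notin> \<tau>"
  proof
    assume "e \<in> \<tau>"
    have "e \<notin> \<sigma>" "finite \<tau>"
      using \<sigma> finite_BD_face[OF assms(2) \<tau>(1)] by (auto simp: BD_def)
    then have "Suc (deg \<sigma> v) \<le> deg \<tau> v"
      using deg_mono[of \<tau> "insert e \<sigma>" v] deg_insert[of \<sigma> e v] \<tau>(2) \<open>e \<in> \<tau>\<close> assms(3)
      by (simp add: finite_subset)
    moreover have "deg \<tau> v \<le> lam v"
      using \<tau>(1) assms(4) by (simp add: BD_def)
    ultimately show False
      using assms(5) by simp
  qed
  then have "\<tau> \<in> BD V (E - {e}) lam"
    using \<tau>(1) by (auto simp: BD_def)
  then show "\<tau> = \<sigma>"
    using facet_maximal[OF assms(1)] \<tau>(2) by blast
qed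

lemma vertex_decomposable_BD_shed:
  assumes "finite E" "e \<in> E" "\<forall>v\<in>e. 1 \<le> lam v"
    and "vertex_decomposable (BD V (E - {e}) lam)"
    and "vertex_decomposable (BD V (E - {e}) (\<lambda>v. if v \<in> e then lam v - 1 else lam v))"
    and saturated: "\<And>\<sigma>. facet \<sigma> (BD V (E - {e}) lam) \<Longrightarrow> \<exists>v\<in>e \<inter> V. lam v \<le> deg \<sigma> v"
  shows "vertex_decomposable (BD V E lam)"
proof (rule vertex_decomposable.decomp)
  have "{f\<in>{e}. v \<in> f} = (if v \<in> e then {e} else {})" for v
    by auto
  then show "{e} \<in> BD V E lam"
    using assms(2,3) by (auto simp: BD_def)
  show "vertex_decomposable (lk e (BD V E lam))"
    using assms(5) lk_BD[OF assms(1-3)] by simp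
  show "vertex_decomposable (del e (BD V E lam))"
    using assms(4) by (simp add: del_BD)
  show "\<forall>\<sigma>. facet \<sigma> (del e (BD V E lam)) \<longrightarrow> facet \<sigma> (BD V E lam)"
  proof (intro allI impI)
    fix \<sigma> assume "facet \<sigma> (del e (BD V E lam))"
    then have \<sigma>: "facet \<sigma> (BD V (E - {e}) lam)"
      by (simp add: del_BD)
    then obtain v where "v \<in> e \<inter> V" "lam v \<le> deg \<sigma> v"
      using saturated by blast
    then show "facet \<sigma> (BD V E lam)"
      using facet_BD_if_facet_Diff[OF \<sigma> assms(1)] by blast
  qed
qed

lemma BD_eq_cone:
  assumes "finite E" "e \<in> E" "\<forall>v\<in>e. deg E v \<le> lam v"
  shows "BD V E lam = cone (BD V (E - {e}) lam) e"
proof (intro equalityI subsetI)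
  fix \<tau> assume \<tau>: "\<tau> \<in> BD V E lam"
  have "deg (\<tau> - {e}) v \<le> lam v" if "v \<in> V" for v
  proof -
    have "deg (\<tau> - {e}) v \<le> deg \<tau> v"
      by (rule deg_mono[OF finite_BD_face[OF assms(1) \<tau>]]) auto
    also have "\<dots> \<le> lam v"
      using \<tau> that by (simp add: BD_def)
    finally show ?thesis .
  qed
  then show "\<tau> \<in> cone (BD V (E - {e}) lam) e"
    using \<tau> by (auto simp: BD_def cone_def)
next
  fix \<tau> assume "\<tau> \<in> cone (BD V (E - {e}) lam) e"
  then have \<tau>: "\<tau> - {e} \<in> BD V (E - {e}) lam"
    by (simp add: cone_def)
  then have "\<tau> \<subseteq> E"
    using assms(2) by (auto simp: BD_def)
  moreover have "deg \<tau> v \<le> lam v" if "v \<in> V" for v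
  proof (cases "v \<in> e")
    case True
    then have "deg E v \<le> lam v"
      using assms(3) by blast
    with deg_mono[OF assms(1) \<open>\<tau> \<subseteq> E\<close>, of v] show ?thesis
      by (rule order_trans)
  next
    case False
    then have "{f\<in>\<tau>. v \<in> f} = {f\<in>\<tau> - {e}. v \<in> f}"
      by auto
    then show ?thesis
      using \<tau> that by (simp add: BD_def)
  qed
  ultimately show "\<tau> \<in> BD V E lam"
    by (simp add: BD_def)
qed

text \<open>If the centre \<open>w\<close> of a star of leaves is unsaturated in a facet, maximality forces
  every leaf edge into the facet.\<close>

lemma facet_BD_saturates_star_centre:
  assumes facet: "facet \<sigma> (BD V E lam)" and "finite E"
    and leaves: "\<And>f. f \<in> P \<Longrightarrow> \<exists>y. f = {w, y} \<and> pendant E w y \<and> 1 \<le> lam y"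
    and "lam w \<le> card P"
  shows "lam w \<le> deg \<sigma> w"
proof (rule ccontr)
  assume unsaturated: "\<not> lam w \<le> deg \<sigma> w"
  have face: "\<sigma> \<in> BD V E lam"
    using facet by (rule facet_mem)
  have \<sigma>: "\<sigma> \<subseteq> E" "finite \<sigma>"
    using face finite_BD_face[OF assms(2) face] by (simp_all add: BD_def)
  have "P \<subseteq> {f\<in>\<sigma>. w \<in> f}"
  proof
    fix f assume "f \<in> P"
    then obtain y where y: "f = {w, y}" "pendant E w y" "1 \<le> lam y"
      using leaves by blast
    have "f \<in> \<sigma>"
    proof (rule ccontr)
      assume "f \<notin> \<sigma>"
      have "deg \<sigma> y = 0"
        using y \<sigma>(1) \<open>f \<notin> \<sigma>\<close> by (auto simp: pendant_def card_eq_0_iff)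
      moreover have "f \<in> E"
        using y by (simp add: pendant_def)
      then obtain v where "v \<in> f" "lam v \<le> deg \<sigma> v"
        using facet_BD_edge_saturated[OF facet assms(2) _ \<open>f \<notin> \<sigma>\<close>] by blast
      moreover have "v = w \<or> v = y"
        using \<open>v \<in> f\<close> y(1) by blast
      ultimately show False
        using y(3) unsaturated by auto
    qed
    then show "f \<in> {f\<in>\<sigma>. w \<in> f}"
      using y(1) by simp
  qed
  then have "card P \<le> deg \<sigma> w"
    using \<sigma>(2) by (intro card_mono) auto
  then show False
    using unsaturated assms(4) by simp
qed

lemma vertex_decomposable_BD_cone_leaf:
  assumes "finite E" "pendant E w u" "deg E w \<le> lam w" "1 \<le> lam u"
    and "vertex_decomposable (BD V (E - {{w, u}}) lam)"
  shows "vertex_decomposable (BD V E lam)"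
proof -
  have wu: "{w, u} \<in> E"
    using assms(2) by (simp add: pendant_def)
  have "\<forall>v\<in>{w, u}. deg E v \<le> lam v"
    using assms(3,4) deg_pendant[OF assms(2)] by auto
  then have "BD V E lam = cone (BD V (E - {{w, u}}) lam) {w, u}"
    by (rule BD_eq_cone[OF assms(1) wu])
  moreover have "\<forall>\<tau>\<in>BD V (E - {{w, u}}) lam. {w, u} \<notin> \<tau>"
    by (auto simp: BD_def)
  ultimately show ?thesis
    using vertex_decomposable_cone[OF assms(5)] by simp
qed

lemma vertex_decomposable_BD_shed_star:
  assumes sg: "simple_graph V E" and e: "e \<in> E" "w \<in> e" and "lam w < deg E w"
    and leaves: "\<And>f. f \<in> E \<Longrightarrow> w \<in> f \<Longrightarrow> f \<noteq> e \<Longrightarrow> \<exists>y. f = {w, y} \<and> pendant E w y \<and> 1 \<le> lam y"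
    and "\<forall>v\<in>e. 1 \<le> lam v"
    and "vertex_decomposable (BD V (E - {e}) lam)"
    and "vertex_decomposable (BD V (E - {e}) (\<lambda>v. if v \<in> e then lam v - 1 else lam v))"
  shows "vertex_decomposable (BD V E lam)"
proof -
  have fin: "finite E"
    using sg by (rule finite_edges)
  define P where "P = {f\<in>E. w \<in> f} - {e}"
  have "card P = deg E w - 1"
    using fin e by (simp add: P_def card_Diff_singleton)
  then have "lam w \<le> card P"
    using assms(4) by simp
  have leaves': "\<exists>y. f = {w, y} \<and> pendant (E - {e}) w y \<and> 1 \<le> lam y" if f: "f \<in> P" for f
  proof -
    obtain y where y: "f = {w, y}" "pendant E w y" "1 \<le> lam y"
      using f leaves[of f] unfolding P_def by blast
    have "{w, y} \<noteq> e"
      using f y(1) unfolding P_def by blast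
    with y(2) have "pendant (E - {e}) w y"
      by (rule pendant_Diff)
    then show ?thesis
      using y(1,3) by blast
  qed
  have "w \<in> V"
    using sg e by (auto simp: simple_graph_def)
  show ?thesis
  proof (rule vertex_decomposable_BD_shed[OF fin e(1) assms(6-8)])
    fix \<sigma> assume "facet \<sigma> (BD V (E - {e}) lam)"
    moreover have "finite (E - {e})"
      using fin by simp
    ultimately have "lam w \<le> deg \<sigma> w"
      using leaves' \<open>lam w \<le> card P\<close> by (rule facet_BD_saturates_star_centre)
    then show "\<exists>v\<in>e \<inter> V. lam v \<le> deg \<sigma> v"
      using e(2) \<open>w \<in> V\<close> by blast
  qed
qed

lemma vertex_decomposable_BD_pendant_star:
  assumes sg: "simple_graph V E"
    and u: "pendant E w u" and star: "\<And>y. {w, y} \<in> E \<Longrightarrow> y \<noteq> x \<Longrightarrow> pendant E w y"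
    and pos: "\<And>f v. f \<in> E \<Longrightarrow> v \<in> f \<Longrightarrow> 1 \<le> lam v"
    and IH: "\<And>e lam'. e \<in> E \<Longrightarrow> vertex_decomposable (BD V (E - {e}) lam')"
  shows "vertex_decomposable (BD V E lam)"
proof -
  have fin: "finite E"
    using sg by (rule finite_edges)
  have wu: "{w, u} \<in> E"
    using u by (simp add: pendant_def)
  show ?thesis
  proof (cases "deg E w \<le> lam w")
    case True
    then show ?thesis
      using vertex_decomposable_BD_cone_leaf[OF fin u _ pos[OF wu] IH[OF wu]] by simp
  next
    case False
    define e where "e = (if {w, x} \<in> E then {w, x} else {w, u})"
    have e: "e \<in> E" "w \<in> e"
      using wu by (auto simp: e_def)
    have "\<exists>y. f = {w, y} \<and> pendant E w y \<and> 1 \<le> lam y" if f: "f \<in> E" "w \<in> f" "f \<noteq> e" for f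
    proof -
      have "card f = 2"
        using sg f(1) by (simp add: simple_graph_def)
      then obtain y where y: "f = {w, y}"
        using f(2) by (rule card_2_other_elem)
      have "y \<noteq> x"
        using f y by (auto simp: e_def)
      then show ?thesis
        using star pos f(1) y by blast
    qed
    then show ?thesis
      using vertex_decomposable_BD_shed_star[OF sg e] False pos e(1) IH[OF e(1)] by simp
  qed
qed

theorem theorem3p1:
  fixes V :: "'a set" and E :: "'a set set" and lam :: "'a \<Rightarrow> nat"
  assumes "forest V E"
  shows "vertex_decomposable (BD V E lam)"
  using assms
proof (induction "card E" arbitrary: E lam rule: less_induct)
  case less
  have sg: "simple_graph V E"
    using less.prems by (simp add: forest_def)
  then have fin: "finite E"
    by (rule finite_edges)
  have IH: "vertex_decomposable (BD V (E - {e}) lam')" if "e \<in> E" for e lam'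
    using less.hyps card_Diff1_less[OF fin that] forest_subset[OF less.prems] by blast
  consider (no_edges) "E = {}"
    | (zero) f v where "f \<in> E" "v \<in> f" "lam v = 0"
    | (positive) "E \<noteq> {}" "\<And>f v. f \<in> E \<Longrightarrow> v \<in> f \<Longrightarrow> 1 \<le> lam v"
    by (metis less_one not_le)
  then show ?case
  proof cases
    case no_edges
    then show ?thesis
      by (simp add: is_simplex_BD_no_edges vertex_decomposable.simplex)
  next
    case zero
    then have "v \<in> V"
      using sg by (auto simp: simple_graph_def)
    then show ?thesis
      using BD_Diff_edge_at_zero[where lam = lam, OF fin zero(2) \<open>v \<in> V\<close> zero(3)] IH[OF zero(1)] by simp
  next
    case positive
    obtain w u x where "pendant E w u" "\<And>y. {w, y} \<in> E \<Longrightarrow> y \<noteq> x \<Longrightarrow> pendant E w y"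
      using forest_pendant_star[OF less.prems positive(1)] by blast
    then show ?thesis
      by (rule vertex_decomposable_BD_pendant_star[OF sg _ _ positive(2) IH])
  qed
qed

end
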